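(* For every Tychonoff space $X$, the following are equivalent: (1) $C_p(X)\models S_{fin}(\Gamma_f,\Gamma_f)$ for every $f\in C_p(X)$; (2) $X\models S_{fin}(\Gamma_F,\Gamma)$; (3) $X\models S_{fin}(\Gamma_{cl},\Gamma_{cl})$ and $X$ is strongly zero-dimensional; (4) $X\models S_1(\Gamma_F,\Gamma)$.
   Context: All spaces are Tychonoff; $C_p(X)$ is $C(X)$ with pointwise convergence topology. For $y$ in a space $Y$: $\Gamma_y=\{A\subseteq Y: A$ infinite, $y\notin A$, every neighbourhood of $y$ contains all but finitely many points of $A\}$. Zero-set: $g^{-1}(0)$, $g\in C(X)$; cozero-set: its complement. A cover $\mathcal U$ of $X$ always means $X=\bigcup\mathcal U$, $X\notin\mathcal U$; $\gamma$-cover: infinite, each point in all but finitely many members. $\Gamma$: open $\gamma$-covers; $\Gamma_{cl}$: clopen $\gamma$-covers. $\Gamma_F$: $\gamma$-covers $\mathcal U$ of $X$ by cozero-sets for which there are zero-sets $F(U)\subseteq U$ ($U\in\mathcal U$) with $\{F(U):U\in\mathcal U\}$ a $\gamma$-cover of $X$. $S_1(\mathcal A,\mathcal B)$: for every sequence $(A_n)$ from $\mathcal A$ there are $b_n\in A_n$ with $\{b_n\}\in\mathcal B$; $S_{fin}(\mathcal A,\mathcal B)$: there are finite $B_n\subseteq A_n$ with $\bigcup_nB_n\in\mathcal B$. *)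

theory Defs
  imports "HOL-Analysis.Analysis"
begin

definition tychonoff_space :: "'a topology \<Rightarrow> bool" where
  "tychonoff_space X \<longleftrightarrow> completely_regular_space X \<and> t1_space X"

definition Cp :: "'a topology \<Rightarrow> ('a \<Rightarrow> real) topology" where
  "Cp X = subtopology (product_topology (\<lambda>_. euclideanreal) (topspace X))
            {f \<in> topspace X \<rightarrow>\<^sub>E UNIV. continuous_map X euclideanreal f}"

definition Gamma_pt :: "'b topology \<Rightarrow> 'b \<Rightarrow> 'b set set" where
  "Gamma_pt Y y = {A. A \<subseteq> topspace Y \<and> infinite A \<and> y \<notin> A \<and>
       (\<forall>U. openin Y U \<and> y \<in> U \<longrightarrow> finite (A - U))}"

definition zero_set :: "'a topology \<Rightarrow> 'a set \<Rightarrow> bool" where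
  "zero_set X Z \<longleftrightarrow> (\<exists>g. continuous_map X euclideanreal g \<and> Z = {x \<in> topspace X. g x = 0})"

definition cozero_set :: "'a topology \<Rightarrow> 'a set \<Rightarrow> bool" where
  "cozero_set X U \<longleftrightarrow> (\<exists>g. continuous_map X euclideanreal g \<and> U = {x \<in> topspace X. g x \<noteq> 0})"

definition is_cover :: "'a topology \<Rightarrow> 'a set set \<Rightarrow> bool" where
  "is_cover X \<U> \<longleftrightarrow> \<Union>\<U> = topspace X \<and> topspace X \<notin> \<U>"

definition gamma_cover :: "'a topology \<Rightarrow> 'a set set \<Rightarrow> bool" where
  "gamma_cover X \<U> \<longleftrightarrow> is_cover X \<U> \<and> infinite \<U> \<and>
      (\<forall>x \<in> topspace X. finite {U \<in> \<U>. x \<notin> U})"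

definition Gamma_open :: "'a topology \<Rightarrow> 'a set set set" where
  "Gamma_open X = {\<U>. gamma_cover X \<U> \<and> (\<forall>U \<in> \<U>. openin X U)}"

definition Gamma_cl :: "'a topology \<Rightarrow> 'a set set set" where
  "Gamma_cl X = {\<U>. gamma_cover X \<U> \<and> (\<forall>U \<in> \<U>. openin X U \<and> closedin X U)}"

definition Gamma_F :: "'a topology \<Rightarrow> 'a set set set" where
  "Gamma_F X = {\<U>. gamma_cover X \<U> \<and> (\<forall>U \<in> \<U>. cozero_set X U) \<and>
      (\<exists>F. (\<forall>U \<in> \<U>. zero_set X (F U) \<and> F U \<subseteq> U) \<and> gamma_cover X (F ` \<U>))}"

definition S1 :: "'b set set \<Rightarrow> 'b set set \<Rightarrow> bool" where
  "S1 \<A> \<B> \<longleftrightarrow> (\<forall>A :: nat \<Rightarrow> 'b set. (\<forall>n. A n \<in> \<A>) \<longrightarrow>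
      (\<exists>b. (\<forall>n. b n \<in> A n) \<and> range b \<in> \<B>))"

definition Sfin :: "'b set set \<Rightarrow> 'b set set \<Rightarrow> bool" where
  "Sfin \<A> \<B> \<longleftrightarrow> (\<forall>A :: nat \<Rightarrow> 'b set. (\<forall>n. A n \<in> \<A>) \<longrightarrow>
      (\<exists>B. (\<forall>n. finite (B n) \<and> B n \<subseteq> A n) \<and> (\<Union>n. B n) \<in> \<B>))"

text \<open>Strongly zero-dimensional (Engelking 6.2.4 characterisation for Tychonoff spaces):
  any two completely separated sets are separated by a clopen set.\<close>
definition strongly_zero_dimensional :: "'a topology \<Rightarrow> bool" where
  "strongly_zero_dimensional X \<longleftrightarrow>
     (\<forall>A B. A \<subseteq> topspace X \<and> B \<subseteq> topspace X \<and>
        (\<exists>f. continuous_map X (top_of_set {0..1::real}) f \<and> f ` A \<subseteq> {0} \<and> f ` B \<subseteq> {1})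
        \<longrightarrow> (\<exists>C. openin X C \<and> closedin X C \<and> A \<subseteq> C \<and> C \<inter> B = {}))"

end

theory Submission
  imports Defs
begin

text \<open>A member of \<open>\<Gamma>\<^sub>F\<close> can be listed as a sequence of cozero-sets \<open>u m\<close> with zero-sets
  \<open>z m \<subseteq> u m\<close> such that every point lies in almost all \<open>z m\<close>, and all selection
  principles are handled on such sequences. Urysohn functions vanishing on \<open>z m\<close> and equal
  to \<open>1\<close> off \<open>u m\<close> form sequences in \<open>C\<^sub>p(X)\<close> converging to \<open>0\<close>; conversely a sequence
  \<open>g m \<rightarrow> f\<close> yields the sets \<open>{x. |g m x - f x| < \<epsilon>}\<close>. This gives (1) \<open>\<longleftrightarrow>\<close> (2).
  Selecting finitely many sets from the intersections of the first \<open>n\<close> sequences and handing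
  them back to the earlier stages yields a single selection, hence (4).
  Strong zero-dimensionality puts clopen sets between \<open>z m\<close> and \<open>u m\<close>, which reduces (2)
  to clopen covers. Conversely, if a continuous \<open>f : X \<rightarrow> [0,1]\<close> took every value in
  \<open>(0,1)\<close>, a single selection from the complements of small intervals accumulating at the
  dyadic points would miss a nested sequence of these intervals, whose common point is a
  value of \<open>f\<close>; so \<open>f\<close> omits some \<open>c\<close>, and \<open>{x. f x < c}\<close> is clopen.\<close>

section \<open>Zero-sets and cozero-sets\<close>

lemma cozero_set_subset_topspace: "cozero_set X U \<Longrightarrow> U \<subseteq> topspace X"
  unfolding cozero_set_def by auto

lemma zero_set_subset_topspace: "zero_set X Z \<Longrightarrow> Z \<subseteq> topspace X"
  unfolding zero_set_def by auto

lemma openin_cozero_set: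
  assumes "cozero_set X U"
  shows "openin X U"
proof -
  obtain g where g: "continuous_map X euclideanreal g" "U = {x \<in> topspace X. g x \<in> - {0}}"
    using assms unfolding cozero_set_def by auto
  show ?thesis
    unfolding g(2) by (rule openin_continuous_map_preimage[OF g(1)]) auto
qed

lemma cozero_set_Collect_less:
  assumes "continuous_map X euclideanreal h"
  shows "cozero_set X {x \<in> topspace X. h x < c}"
  unfolding cozero_set_def
  by (intro exI[of _ "\<lambda>x. max 0 (c - h x)"] conjI continuous_intros assms) auto

lemma zero_set_Collect_le:
  assumes "continuous_map X euclideanreal h"
  shows "zero_set X {x \<in> topspace X. h x \<le> c}"
  unfolding zero_set_def
  by (intro exI[of _ "\<lambda>x. max 0 (h x - c)"] conjI continuous_intros assms) auto

lemma cozero_set_Collect_outside: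
  assumes "continuous_map X euclideanreal h"
  shows "cozero_set X {x \<in> topspace X. h x < c \<or> d < h x}"
  unfolding cozero_set_def
  by (intro exI[of _ "\<lambda>x. max 0 (c - h x) + max 0 (h x - d)"] conjI continuous_intros assms)
    auto

lemma zero_set_Collect_outside:
  assumes "continuous_map X euclideanreal h"
  shows "zero_set X {x \<in> topspace X. h x \<le> c \<or> d \<le> h x}"
  unfolding zero_set_def
  by (intro exI[of _ "\<lambda>x. max 0 (h x - c) * max 0 (d - h x)"] conjI continuous_intros assms)
    (auto simp: max_def)

lemma cozero_set_Int:
  assumes "cozero_set X U" "cozero_set X V"
  shows "cozero_set X (U \<inter> V)"
proof -
  obtain g h where "continuous_map X euclideanreal g" "U = {x \<in> topspace X. g x \<noteq> 0}"
    "continuous_map X euclideanreal h" "V = {x \<in> topspace X. h x \<noteq> 0}"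
    using assms unfolding cozero_set_def by auto
  then show ?thesis
    unfolding cozero_set_def by (intro exI[of _ "\<lambda>x. g x * h x"]) (auto intro: continuous_intros)
qed

lemma zero_set_Int:
  assumes "zero_set X Z" "zero_set X Z'"
  shows "zero_set X (Z \<inter> Z')"
proof -
  obtain g h where "continuous_map X euclideanreal g" "Z = {x \<in> topspace X. g x = 0}"
    "continuous_map X euclideanreal h" "Z' = {x \<in> topspace X. h x = 0}"
    using assms unfolding zero_set_def by auto
  then show ?thesis
    unfolding zero_set_def
    by (intro exI[of _ "\<lambda>x. \<bar>g x\<bar> + \<bar>h x\<bar>"]) (auto intro: continuous_intros)
qed

lemma
  assumes "openin X U" "closedin X U"
  shows zero_set_clopen: "zero_set X U" and cozero_set_clopen: "cozero_set X U"
proof -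
  define g where "g x = (if x \<in> U then 0 else 1::real)" for x
  have "openin X {x \<in> topspace X. g x \<in> V}" for V
  proof -
    have "{x \<in> topspace X. g x \<in> V} =
        (if 0 \<in> V then U else {}) \<union> (if 1 \<in> V then topspace X - U else {})"
      using openin_subset[OF assms(1)] by (auto simp: g_def)
    then show ?thesis
      using assms by auto
  qed
  then have g: "continuous_map X euclideanreal g"
    by (simp add: continuous_map_def)
  show "zero_set X U"
    unfolding zero_set_def using g openin_subset[OF assms(1)]
    by (intro exI[of _ g]) (auto simp: g_def)
  show "cozero_set X U"
    unfolding cozero_set_def using g openin_subset[OF assms(1)]
    by (intro exI[of _ "\<lambda>x. 1 - g x"] conjI continuous_intros g) (auto simp: g_def)
qed

lemma zero_set_cozero_set_separation:
  assumes "zero_set X Z" "cozero_set X U" "Z \<subseteq> U"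
  obtains h where "continuous_map X (top_of_set {0..1::real}) h" "\<And>x. x \<in> Z \<Longrightarrow> h x = 0"
    "\<And>x. x \<in> topspace X \<Longrightarrow> h x = 1 \<longleftrightarrow> x \<notin> U"
proof -
  obtain k where k: "continuous_map X euclideanreal k" "Z = {x \<in> topspace X. k x = 0}"
    using assms(1) unfolding zero_set_def by auto
  obtain g where g: "continuous_map X euclideanreal g" "U = {x \<in> topspace X. g x \<noteq> 0}"
    using assms(2) unfolding cozero_set_def by auto
  have pos: "\<bar>k x\<bar> + \<bar>g x\<bar> > 0" if "x \<in> topspace X" for x
    using assms(3) g k that by auto
  define h where "h x = \<bar>k x\<bar> / (\<bar>k x\<bar> + \<bar>g x\<bar>)" for x
  have "continuous_map X euclideanreal h"
    unfolding h_def using pos by (intro continuous_intros k g) force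
  moreover have "h x \<in> {0..1}" if "x \<in> topspace X" for x
    using pos[OF that] by (auto simp: h_def divide_simps)
  ultimately have "continuous_map X (top_of_set {0..1}) h"
    by (auto simp: continuous_map_in_subtopology)
  moreover have "h x = 1 \<longleftrightarrow> x \<notin> U" if "x \<in> topspace X" for x
    using pos[OF that] that g by (auto simp: h_def divide_simps)
  ultimately show thesis
    using k by (intro that[of h]) (auto simp: h_def)
qed

section \<open>Indexed \<open>\<gamma>\<close>-families\<close>

definition gamma_family :: "'a topology \<Rightarrow> 'i set \<Rightarrow> ('i \<Rightarrow> 'a set) \<Rightarrow> bool" where
  "gamma_family X I s \<longleftrightarrow> infinite I \<and> (\<forall>x \<in> topspace X. finite {i \<in> I. x \<notin> s i})"

lemma gamma_family_mono:
  assumes "gamma_family X I s" "\<And>i. i \<in> I \<Longrightarrow> s i \<subseteq> t i"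
  shows "gamma_family X I t"
proof -
  have "{i \<in> I. x \<notin> t i} \<subseteq> {i \<in> I. x \<notin> s i}" for x
    using assms(2) by auto
  then show ?thesis
    using assms(1) unfolding gamma_family_def by (meson rev_finite_subset)
qed

lemma gamma_family_subset:
  assumes "gamma_family X I s" "J \<subseteq> I" "infinite J"
  shows "gamma_family X J s"
  using assms unfolding gamma_family_def by (auto elim!: rev_finite_subset)

lemma gamma_family_reindex:
  assumes "inj_on h J"
  shows "gamma_family X (h ` J) s \<longleftrightarrow> gamma_family X J (\<lambda>j. s (h j))"
proof -
  have "{i \<in> h ` J. x \<notin> s i} = h ` {j \<in> J. x \<notin> s (h j)}" for x
    by auto
  moreover have "inj_on h {j \<in> J. x \<notin> s (h j)}" for x
    using assms by (rule inj_on_subset) auto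
  ultimately show ?thesis
    using assms unfolding gamma_family_def by (simp add: finite_image_iff)
qed

lemma gamma_cover_member:
  "gamma_cover X \<U> \<Longrightarrow> U \<in> \<U> \<Longrightarrow> U \<subseteq> topspace X \<and> U \<noteq> topspace X"
  unfolding gamma_cover_def is_cover_def by auto

lemma gamma_cover_imp_gamma_family: "gamma_cover X \<U> \<Longrightarrow> gamma_family X \<U> (\<lambda>U. U)"
  unfolding gamma_cover_def gamma_family_def by simp

lemma gamma_cover_image:
  assumes "gamma_family X I s" and proper: "\<And>i. i \<in> I \<Longrightarrow> s i \<subseteq> topspace X \<and> s i \<noteq> topspace X"
  shows "gamma_cover X (s ` I)"
proof -
  have I: "infinite I" and bad: "\<And>x. x \<in> topspace X \<Longrightarrow> finite {i \<in> I. x \<notin> s i}"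
    using assms(1) unfolding gamma_family_def by auto
  have "finite (s -` {U} \<inter> I)" if "U \<in> s ` I" for U
  proof -
    obtain x where x: "x \<in> topspace X" "x \<notin> U"
      using proper \<open>U \<in> s ` I\<close> by blast
    show ?thesis
      by (rule rev_finite_subset[OF bad[OF x(1)]]) (use x in auto)
  qed
  moreover have "I \<subseteq> s -` (s ` I) \<inter> I"
    by blast
  ultimately have "infinite (s ` I)"
    using I finite_finite_vimage_IntI[of "s ` I" s I] finite_subset by blast
  moreover have "\<Union> (s ` I) = topspace X"
  proof
    show "topspace X \<subseteq> \<Union> (s ` I)"
    proof
      fix x assume "x \<in> topspace X"
      then have "\<not> I \<subseteq> {i \<in> I. x \<notin> s i}"
        using I bad infinite_super by blast
      then show "x \<in> \<Union> (s ` I)" by blast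
    qed
  qed (use proper in auto)
  moreover have "topspace X \<notin> s ` I"
    using proper by auto
  moreover have "finite {U \<in> s ` I. x \<notin> U}" if "x \<in> topspace X" for x
  proof -
    have "{U \<in> s ` I. x \<notin> U} = s ` {i \<in> I. x \<notin> s i}"
      by auto
    then show ?thesis
      using bad[OF that] by simp
  qed
  ultimately show ?thesis
    unfolding gamma_cover_def is_cover_def by blast
qed

lemma infinite_SIGMA_iff:
  assumes "\<And>n. finite (M n)"
  shows "infinite (SIGMA n:UNIV. M n) \<longleftrightarrow> infinite {n. M n \<noteq> {}}"
proof -
  have "(SIGMA n:UNIV. M n) = (SIGMA n:{n. M n \<noteq> {}}. M n)"
    by auto
  moreover have "{n. M n \<noteq> {}} = fst ` (SIGMA n:UNIV. M n)"
    by force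
  ultimately show ?thesis
    using assms by (metis finite_SigmaI finite_imageI)
qed

text \<open>Repetitions in the selected finite sets are removed by assigning each set of the
  cover to the first stage at which it is selected.\<close>
lemma gamma_cover_Union_imp_gamma_family:
  fixes B :: "nat \<Rightarrow> 'a set set"
  assumes "gamma_cover X (\<Union>n. B n)" "\<And>n. finite (B n)" "\<And>n. B n \<subseteq> range (s n)"
  obtains M where "\<And>n. finite (M n)" "gamma_family X (SIGMA n:UNIV. M n) (\<lambda>(n, m). s n m)"
proof -
  define first where "first V = (LEAST n::nat. V \<in> B n)" for V
  define B' where "B' n = {V \<in> B n. first V = n}" for n
  have "\<exists>M. inj_on (s n) M \<and> B' n = s n ` M" for n
    using assms(3) subset_image_inj[of "B' n" "s n" UNIV] unfolding B'_def by blast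
  then obtain M where inj: "\<And>n. inj_on (s n) (M n)" and M: "\<And>n. B' n = s n ` M n"
    by metis
  have "finite (M n)" for n
  proof -
    have "finite (s n ` M n)"
      unfolding M[symmetric] B'_def by (rule rev_finite_subset[OF assms(2)[of n]]) auto
    then show ?thesis
      using finite_image_iff[OF inj] by blast
  qed
  have inj_pairs: "inj_on (\<lambda>(n, m). s n m) (SIGMA n:UNIV. M n)"
  proof (rule inj_onI, clarsimp)
    fix n m n' m' assume "m \<in> M n" "m' \<in> M n'" "s n m = s n' m'"
    moreover have "first (s n m) = n" "first (s n' m') = n'"
      using \<open>m \<in> M n\<close> \<open>m' \<in> M n'\<close> M unfolding B'_def by blast+
    ultimately show "n = n' \<and> m = m'"
      using inj by (metis inj_onD)
  qed
  have image_pairs: "(\<lambda>(n, m). s n m) ` (SIGMA n:UNIV. M n) = (\<Union>n. B n)"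
  proof -
    have "(\<Union>n. B' n) = (\<Union>n. B n)"
    proof
      show "(\<Union>n. B n) \<subseteq> (\<Union>n. B' n)"
        unfolding B'_def first_def by (auto intro: LeastI)
    qed (auto simp: B'_def)
    moreover have "(\<lambda>(n, m). s n m) ` (SIGMA n:UNIV. M n) = (\<Union>n. s n ` M n)"
      by force
    ultimately show ?thesis
      unfolding M by simp
  qed
  have "gamma_family X (SIGMA n:UNIV. M n) (\<lambda>(n, m). s n m)"
    using gamma_family_reindex[OF inj_pairs, of X "\<lambda>U. U"] image_pairs
      gamma_cover_imp_gamma_family[OF assms(1)] by simp
  with \<open>\<And>n. finite (M n)\<close> show thesis ..
qed

section \<open>Selection from \<open>\<Gamma>\<^sub>F\<close>-sequences\<close>

text \<open>A sequential form of the members of \<open>\<Gamma>\<^sub>F\<close>; unlike there, the sets \<open>u m\<close>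
  may repeat and may equal the whole space.\<close>
definition Gamma_F_seq :: "'a topology \<Rightarrow> (nat \<Rightarrow> 'a set) \<Rightarrow> (nat \<Rightarrow> 'a set) \<Rightarrow> bool" where
  "Gamma_F_seq X u z \<longleftrightarrow>
     (\<forall>m. cozero_set X (u m) \<and> zero_set X (z m) \<and> z m \<subseteq> u m) \<and> gamma_family X UNIV z"

lemma Gamma_F_seq_subseq:
  assumes "Gamma_F_seq X u z" "inj e"
  shows "Gamma_F_seq X (\<lambda>k. u (e k)) (\<lambda>k. z (e k))"
proof -
  have "gamma_family X (range e) z"
    using assms gamma_family_subset range_inj_infinite unfolding Gamma_F_seq_def by blast
  then show ?thesis
    using assms gamma_family_reindex[of e UNIV X z] unfolding Gamma_F_seq_def by simp
qed

lemma Gamma_F_seq_Int: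
  assumes "Gamma_F_seq X u z" "Gamma_F_seq X u' z'"
  shows "Gamma_F_seq X (\<lambda>m. u m \<inter> u' m) (\<lambda>m. z m \<inter> z' m)"
  unfolding Gamma_F_seq_def gamma_family_def
proof (intro conjI allI ballI)
  fix m
  show "cozero_set X (u m \<inter> u' m)" "zero_set X (z m \<inter> z' m)" "z m \<inter> z' m \<subseteq> u m \<inter> u' m"
    using assms by (auto simp: Gamma_F_seq_def intro: cozero_set_Int zero_set_Int)
next
  fix x assume "x \<in> topspace X"
  then have "finite ({m. x \<notin> z m} \<union> {m. x \<notin> z' m})"
    using assms by (simp add: Gamma_F_seq_def gamma_family_def)
  then show "finite {m \<in> UNIV. x \<notin> z m \<inter> z' m}"
    by (rule rev_finite_subset) auto
qed simp

lemma Gamma_F_seq_INT: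
  fixes u z :: "nat \<Rightarrow> nat \<Rightarrow> 'a set"
  assumes "\<And>i. Gamma_F_seq X (u i) (z i)"
  shows "Gamma_F_seq X (\<lambda>m. \<Inter>i\<le>n. u i m) (\<lambda>m. \<Inter>i\<le>n. z i m)"
proof (induction n)
  case (Suc n)
  then show ?case
    using Gamma_F_seq_Int[OF assms[of "Suc n"] Suc] by (simp add: atMost_Suc)
qed (simp add: assms)

lemma Gamma_F_member:
  assumes "\<U> \<in> Gamma_F X" "U \<in> \<U>"
  shows "U \<subseteq> topspace X \<and> U \<noteq> topspace X \<and> openin X U"
  using assms gamma_cover_member[of X \<U> U] by (auto simp: Gamma_F_def openin_cozero_set)

lemma image_in_Gamma_F:
  assumes "gamma_family X I z"
    and uz: "\<And>i. i \<in> I \<Longrightarrow> cozero_set X (u i) \<and> zero_set X (z i) \<and> z i \<subseteq> u i \<and> u i \<noteq> topspace X"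
  shows "u ` I \<in> Gamma_F X"
proof -
  have "\<exists>J\<subseteq>I. inj_on u J \<and> u ` I = u ` J"
    by (rule subset_image_inj[THEN iffD1]) simp
  then obtain J where J: "J \<subseteq> I" "inj_on u J" "u ` I = u ` J"
    by blast
  have proper: "u i \<subseteq> topspace X \<and> u i \<noteq> topspace X" if "i \<in> I" for i
    using uz[OF that] by (simp add: cozero_set_subset_topspace)
  have "gamma_family X I u"
    using assms(1) by (rule gamma_family_mono) (use uz in blast)
  then have cover: "gamma_cover X (u ` I)"
    using proper by (rule gamma_cover_image)
  then have "infinite (u ` J)"
    unfolding J(3) gamma_cover_def by simp
  then have "infinite J"
    using finite_imageI by blast
  then have "gamma_family X J z"
    using gamma_family_subset[OF assms(1) J(1)] by blast
  define F where "F = z \<circ> the_inv_into J u"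
  have F: "F (u j) = z j" if "j \<in> J" for j
    unfolding F_def using J(2) that by (simp add: the_inv_into_f_f)
  have "F ` u ` I = z ` J"
    unfolding J(3) image_image using F by (auto intro: image_cong)
  moreover have "gamma_cover X (z ` J)"
  proof (rule gamma_cover_image[OF \<open>gamma_family X J z\<close>])
    fix j assume "j \<in> J"
    then have "z j \<subseteq> u j" "u j \<subseteq> topspace X" "u j \<noteq> topspace X"
      using uz[of j] proper[of j] J(1) by auto
    then show "z j \<subseteq> topspace X \<and> z j \<noteq> topspace X"
      by blast
  qed
  moreover have "zero_set X (F U) \<and> F U \<subseteq> U" if U: "U \<in> u ` I" for U
  proof -
    obtain j where "j \<in> J" "U = u j"
      using U unfolding J(3) by blast
    then show ?thesis
      using F[of j] uz[of j] J(1) by auto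
  qed
  ultimately show ?thesis
    unfolding Gamma_F_def using cover uz by (intro CollectI conjI exI[of _ F]) simp_all
qed

lemma Gamma_F_obtain_seq:
  assumes "A \<in> Gamma_F X"
  obtains u z where "range u \<subseteq> A" "Gamma_F_seq X u z"
proof -
  obtain F where A: "gamma_cover X A" "\<forall>U \<in> A. cozero_set X U"
    and F: "\<forall>U \<in> A. zero_set X (F U) \<and> F U \<subseteq> U" "gamma_cover X (F ` A)"
    using assms unfolding Gamma_F_def by auto
  obtain z :: "nat \<Rightarrow> 'a set" where "inj z" "range z \<subseteq> F ` A"
    using infinite_countable_subset F(2) unfolding gamma_cover_def by metis
  then have "\<forall>m. \<exists>U. U \<in> A \<and> F U = z m"
    by blast
  then obtain u where u: "\<And>m. u m \<in> A \<and> F (u m) = z m"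
    using choice[of "\<lambda>m U. U \<in> A \<and> F U = z m"] by blast
  have "gamma_family X (range z) (\<lambda>Z. Z)"
    using gamma_family_subset[OF gamma_cover_imp_gamma_family[OF F(2)] \<open>range z \<subseteq> F ` A\<close>]
      range_inj_infinite[OF \<open>inj z\<close>] by blast
  then have "gamma_family X UNIV z"
    using gamma_family_reindex[OF \<open>inj z\<close>, of X "\<lambda>Z. Z"] by simp
  then have "Gamma_F_seq X u z"
    unfolding Gamma_F_seq_def using u A(2) F(1) by metis
  with u show thesis
    using that by blast
qed

lemma Gamma_F_obtain_seqs:
  assumes "\<And>n. A n \<in> Gamma_F X"
  obtains u z where "\<And>n m. u n m \<in> A n" "\<And>n. Gamma_F_seq X (u n) (z n)"
proof -
  have "\<forall>n. \<exists>u z. range u \<subseteq> A n \<and> Gamma_F_seq X u z"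
    using Gamma_F_obtain_seq[OF assms] by blast
  then obtain u where "\<forall>n. \<exists>z. range (u n) \<subseteq> A n \<and> Gamma_F_seq X (u n) z"
    using choice[of "\<lambda>n u. \<exists>z. range u \<subseteq> A n \<and> Gamma_F_seq X u z"] by blast
  then obtain z where "\<forall>n. range (u n) \<subseteq> A n \<and> Gamma_F_seq X (u n) (z n)"
    using choice[of "\<lambda>n z. range (u n) \<subseteq> A n \<and> Gamma_F_seq X (u n) z"] by blast
  then show thesis
    using that[of u z] by blast
qed

lemma Sfin_Gamma_F_select_proper:
  fixes u z :: "nat \<Rightarrow> nat \<Rightarrow> 'a set"
  assumes "Sfin (Gamma_F X) (Gamma_open X)"
    and "\<And>n. Gamma_F_seq X (u n) (z n)" and "\<And>n m. u n m \<noteq> topspace X"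
  obtains M where "\<And>n. finite (M n)" "gamma_family X (SIGMA n:UNIV. M n) (\<lambda>(n, m). u n m)"
proof -
  have "range (u n) \<in> Gamma_F X" for n
  proof (rule image_in_Gamma_F)
    show "gamma_family X UNIV (z n)"
      using assms(2) by (simp add: Gamma_F_seq_def)
    show "cozero_set X (u n m) \<and> zero_set X (z n m) \<and> z n m \<subseteq> u n m \<and> u n m \<noteq> topspace X" for m
      using assms(2,3) by (simp add: Gamma_F_seq_def)
  qed
  then obtain B where B: "\<forall>n. finite (B n) \<and> B n \<subseteq> range (u n)" "(\<Union>n. B n) \<in> Gamma_open X"
    using assms(1)[unfolded Sfin_def, rule_format, of "\<lambda>n. range (u n)"] by blast
  then have "gamma_cover X (\<Union>n. B n)"
    by (simp add: Gamma_open_def)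
  then obtain M where "\<And>n. finite (M n)" "gamma_family X (SIGMA n:UNIV. M n) (\<lambda>(n, m). u n m)"
    by (rule gamma_cover_Union_imp_gamma_family[of X B u]) (use B in auto)
  then show thesis
    by (rule that)
qed

text \<open>If some sequence has infinitely many proper members, intersecting with them makes all
  sequences proper; otherwise every sequence contains the whole space, a harmless choice.\<close>
lemma Sfin_Gamma_F_select:
  fixes u z :: "nat \<Rightarrow> nat \<Rightarrow> 'a set"
  assumes Sfin: "Sfin (Gamma_F X) (Gamma_open X)" and uz: "\<And>n. Gamma_F_seq X (u n) (z n)"
  obtains M where "\<And>n. finite (M n)" "gamma_family X (SIGMA n:UNIV. M n) (\<lambda>(n, m). u n m)"
proof (cases "\<exists>n. infinite {m. u n m \<noteq> topspace X}")
  case True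
  then obtain n0 and e :: "nat \<Rightarrow> nat" where e: "inj e" "\<And>j. u n0 (e j) \<noteq> topspace X"
    by (metis (mono_tags) infinite_countable_subset mem_Collect_eq range_subsetD)
  define v where "v n j = u n j \<inter> u n0 (e j)" for n j
  define w where "w n j = z n j \<inter> z n0 (e j)" for n j
  have vw: "Gamma_F_seq X (v n) (w n)" for n
    unfolding v_def w_def by (rule Gamma_F_seq_Int[OF uz Gamma_F_seq_subseq[OF uz e(1)]])
  have "v n j \<noteq> topspace X" for n j
    using e(2)[of j] cozero_set_subset_topspace[of X "u n0 (e j)"] uz[of n0]
    by (auto simp: v_def Gamma_F_seq_def)
  then obtain M where M: "\<And>n. finite (M n)" "gamma_family X (SIGMA n:UNIV. M n) (\<lambda>(n, j). v n j)"
    by (rule Sfin_Gamma_F_select_proper[of X v w, OF Sfin vw]) blast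
  have "gamma_family X (SIGMA n:UNIV. M n) (\<lambda>(n, m). u n m)"
    by (rule gamma_family_mono[OF M(2)]) (auto simp: v_def)
  with M(1) show thesis
    by (rule that)
next
  case False
  then have "\<forall>n. \<exists>m. u n m = topspace X"
    using ex_new_if_finite[OF infinite_UNIV_nat] by blast
  from choice[OF this] obtain m0 where m0: "\<forall>n. u n (m0 n) = topspace X" ..
  define M where "M n = {m0 n}" for n
  have "infinite (SIGMA n:UNIV. M n)"
    by (subst infinite_SIGMA_iff) (auto simp: M_def)
  moreover have "{p \<in> SIGMA n:UNIV. M n. x \<notin> u (fst p) (snd p)} = {}" if "x \<in> topspace X" for x
    using that m0 by (auto simp: M_def)
  ultimately have "gamma_family X (SIGMA n:UNIV. M n) (\<lambda>(n, m). u n m)"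
    unfolding gamma_family_def split_def by (metis finite.emptyI)
  then show thesis
    by (rule that[rotated]) (simp add: M_def)
qed

text \<open>The usual diagonalisation: select finitely many sets from the sequence of the
  intersections \<open>\<Inter>i\<le>n. u i\<close>, and use a set selected at a stage \<open>N \<ge> i\<close> for stage \<open>i\<close>.\<close>
lemma Sfin_Gamma_F_diagonal:
  fixes u z :: "nat \<Rightarrow> nat \<Rightarrow> 'a set"
  assumes Sfin: "Sfin (Gamma_F X) (Gamma_open X)" and uz: "\<And>n. Gamma_F_seq X (u n) (z n)"
  obtains m where "gamma_family X UNIV (\<lambda>n. u n (m n))"
proof -
  define W where "W n j = (\<Inter>i\<le>n. u i j)" for n j
  define Z where "Z n j = (\<Inter>i\<le>n. z i j)" for n j
  have WZ: "Gamma_F_seq X (W n) (Z n)" for n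
    unfolding W_def Z_def by (rule Gamma_F_seq_INT[OF uz])
  obtain M where M: "\<And>n. finite (M n)" "gamma_family X (SIGMA n:UNIV. M n) (\<lambda>(n, j). W n j)"
    by (rule Sfin_Gamma_F_select[of X W Z, OF Sfin WZ]) blast
  then have "infinite {n. M n \<noteq> {}}"
    using infinite_SIGMA_iff[of M, OF M(1)] unfolding gamma_family_def by blast
  then have "\<forall>i. \<exists>n. i \<le> n \<and> M n \<noteq> {}"
    unfolding infinite_nat_iff_unbounded_le by auto
  from choice[OF this] obtain N where N: "\<forall>i. i \<le> N i \<and> M (N i) \<noteq> {}" ..
  then have "\<forall>i. \<exists>j. j \<in> M (N i)"
    by blast
  from choice[OF this] obtain m where m: "\<forall>i. m i \<in> M (N i)" ..
  have "finite {i. x \<notin> u i (m i)}" if x: "x \<in> topspace X" for x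
  proof -
    define Bad where "Bad = {p \<in> SIGMA n:UNIV. M n. x \<notin> W (fst p) (snd p)}"
    have "finite Bad"
      using M(2) x unfolding Bad_def gamma_family_def by (simp add: split_def)
    moreover have "{i. x \<notin> u i (m i)} \<subseteq> (\<Union>p\<in>Bad. {..fst p})"
    proof
      fix i assume "i \<in> {i. x \<notin> u i (m i)}"
      then have "(N i, m i) \<in> Bad"
        using m N unfolding Bad_def W_def by auto
      then show "i \<in> (\<Union>p\<in>Bad. {..fst p})"
        using N by force
    qed
    ultimately show ?thesis
      by (meson finite_UN_I finite_atMost finite_subset)
  qed
  then show thesis
    by (intro that[of m]) (simp add: gamma_family_def)
qed

lemma S1_imp_Sfin:
  assumes "S1 \<A> \<B>"
  shows "Sfin \<A> \<B>"
  unfolding Sfin_def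
proof (intro allI impI)
  fix A :: "nat \<Rightarrow> _"
  assume "\<forall>n. A n \<in> \<A>"
  then obtain b where "\<forall>n. b n \<in> A n" "range b \<in> \<B>"
    using assms[unfolded S1_def, rule_format, of A] by blast
  moreover have "(\<Union>n. {b n}) = range b"
    by blast
  ultimately show "\<exists>B. (\<forall>n. finite (B n) \<and> B n \<subseteq> A n) \<and> (\<Union>n. B n) \<in> \<B>"
    by (intro exI[of _ "\<lambda>n. {b n}"]) simp
qed

lemma Sfin_Gamma_F_imp_S1:
  assumes "Sfin (Gamma_F X) (Gamma_open X)"
  shows "S1 (Gamma_F X) (Gamma_open X)"
  unfolding S1_def
proof (intro allI impI)
  fix A :: "nat \<Rightarrow> 'a set set"
  assume "\<forall>n. A n \<in> Gamma_F X"
  then have A: "\<And>n. A n \<in> Gamma_F X"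
    by blast
  obtain u z where u: "\<And>n m. u n m \<in> A n" and uz: "\<And>n. Gamma_F_seq X (u n) (z n)"
    by (rule Gamma_F_obtain_seqs[of A X, OF A]) blast
  obtain m where m: "gamma_family X UNIV (\<lambda>n. u n (m n))"
    by (rule Sfin_Gamma_F_diagonal[of X u z, OF assms uz]) blast
  have u_member: "u n (m n) \<subseteq> topspace X \<and> u n (m n) \<noteq> topspace X \<and> openin X (u n (m n))" for n
    using Gamma_F_member[OF A u] .
  then have "gamma_cover X (range (\<lambda>n. u n (m n)))"
    by (intro gamma_cover_image[OF m]) simp
  then show "\<exists>b. (\<forall>n. b n \<in> A n) \<and> range b \<in> Gamma_open X"
    using u u_member by (intro exI[of _ "\<lambda>n. u n (m n)"]) (auto simp: Gamma_open_def)
qed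

section \<open>The space \<open>C\<^sub>p(X)\<close>\<close>

lemma topspace_Cp: "topspace (Cp X) = {f \<in> topspace X \<rightarrow>\<^sub>E UNIV. continuous_map X euclideanreal f}"
  unfolding Cp_def by (auto simp: topspace_subtopology)

lemma continuous_map_Cp_eval:
  assumes "x \<in> topspace X"
  shows "continuous_map (Cp X) euclideanreal (\<lambda>g. g x)"
  unfolding Cp_def
  using continuous_map_product_projection[OF assms, of "\<lambda>_. euclideanreal"]
  by (rule continuous_map_from_subtopology)

lemma Cp_basic_neighbourhood:
  assumes "openin (Cp X) U" "f \<in> U"
  obtains K e where "finite K" "K \<subseteq> topspace X" "e > 0"
    "\<And>g. g \<in> topspace (Cp X) \<Longrightarrow> (\<forall>x \<in> K. \<bar>g x - f x\<bar> < e) \<Longrightarrow> g \<in> U"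
proof -
  obtain T where T: "openin (product_topology (\<lambda>_. euclideanreal) (topspace X)) T"
    "U = T \<inter> topspace (Cp X)"
    using assms(1) unfolding Cp_def openin_subtopology topspace_Cp by (auto simp: Cp_def topspace_subtopology)
  then obtain V where V: "finite {x \<in> topspace X. V x \<noteq> UNIV}" "\<And>x. x \<in> topspace X \<Longrightarrow> open (V x)"
    "f \<in> Pi\<^sub>E (topspace X) V" "Pi\<^sub>E (topspace X) V \<subseteq> T"
    using assms(2) unfolding openin_product_topology_alt by auto
  define K where "K = {x \<in> topspace X. V x \<noteq> UNIV}"
  have "\<exists>e>0. ball (f x) e \<subseteq> V x" if "x \<in> K" for x
    using V(2,3) that open_contains_ball by (auto simp: K_def PiE_iff)
  then have "\<forall>x. \<exists>e. x \<in> K \<longrightarrow> e > 0 \<and> ball (f x) e \<subseteq> V x"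
    by blast
  from choice[OF this] obtain \<epsilon> where \<epsilon>: "\<forall>x. x \<in> K \<longrightarrow> \<epsilon> x > 0 \<and> ball (f x) (\<epsilon> x) \<subseteq> V x" ..
  define e where "e = Min (insert 1 (\<epsilon> ` K))"
  have "finite K"
    using V(1) by (simp add: K_def)
  then have "e > 0" and e_le: "\<And>x. x \<in> K \<Longrightarrow> e \<le> \<epsilon> x"
    using \<epsilon> by (auto simp: e_def)
  have "g \<in> U" if g: "g \<in> topspace (Cp X)" "\<forall>x \<in> K. \<bar>g x - f x\<bar> < e" for g
  proof -
    have "g x \<in> V x" if "x \<in> topspace X" for x
    proof (cases "x \<in> K")
      case True
      then have "g x \<in> ball (f x) (\<epsilon> x)"
        using g(2) e_le[OF True] by (auto simp: dist_real_def abs_minus_commute)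
      then show ?thesis
        using \<epsilon> True by blast
    qed (use that K_def in auto)
    then have "g \<in> Pi\<^sub>E (topspace X) V"
      using g(1) by (auto simp: topspace_Cp PiE_iff)
    then show ?thesis
      using T(2) V(4) g(1) by blast
  qed
  then show thesis
    using that[of K e] \<open>finite K\<close> \<open>e > 0\<close> by (auto simp: K_def)
qed

lemma Gamma_pt_Cp_iff:
  assumes f: "f \<in> topspace (Cp X)"
  shows "A \<in> Gamma_pt (Cp X) f \<longleftrightarrow> A \<subseteq> topspace (Cp X) \<and> infinite A \<and> f \<notin> A \<and>
           (\<forall>x \<in> topspace X. \<forall>e>0. finite {g \<in> A. e \<le> \<bar>g x - f x\<bar>})"
proof
  assume A: "A \<in> Gamma_pt (Cp X) f"
  have "finite {g \<in> A. e \<le> \<bar>g x - f x\<bar>}" if x: "x \<in> topspace X" and "e > 0" for x e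
  proof -
    define U where "U = {g \<in> topspace (Cp X). g x \<in> ball (f x) e}"
    have "openin (Cp X) U"
      unfolding U_def by (rule openin_continuous_map_preimage[OF continuous_map_Cp_eval[OF x]]) simp
    moreover have "f \<in> U"
      unfolding U_def using f \<open>e > 0\<close> by simp
    ultimately have "finite (A - U)"
      using A unfolding Gamma_pt_def by blast
    then show ?thesis
      by (rule rev_finite_subset) (auto simp: U_def dist_real_def)
  qed
  then show "A \<subseteq> topspace (Cp X) \<and> infinite A \<and> f \<notin> A \<and>
           (\<forall>x \<in> topspace X. \<forall>e>0. finite {g \<in> A. e \<le> \<bar>g x - f x\<bar>})"
    using A unfolding Gamma_pt_def by blast
next
  assume A: "A \<subseteq> topspace (Cp X) \<and> infinite A \<and> f \<notin> A \<and>
           (\<forall>x \<in> topspace X. \<forall>e>0. finite {g \<in> A. e \<le> \<bar>g x - f x\<bar>})"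
  have "finite (A - U)" if U: "openin (Cp X) U" "f \<in> U" for U
  proof -
    obtain K e where K: "finite K" "K \<subseteq> topspace X" "e > 0"
      and sub: "\<And>g. g \<in> topspace (Cp X) \<Longrightarrow> (\<forall>x \<in> K. \<bar>g x - f x\<bar> < e) \<Longrightarrow> g \<in> U"
      by (rule Cp_basic_neighbourhood[OF U]) blast
    have "A - U \<subseteq> (\<Union>x \<in> K. {g \<in> A. e \<le> \<bar>g x - f x\<bar>})"
      using A sub by force
    moreover have "finite (\<Union>x \<in> K. {g \<in> A. e \<le> \<bar>g x - f x\<bar>})"
      using A K by blast
    ultimately show ?thesis
      by (rule finite_subset)
  qed
  then show "A \<in> Gamma_pt (Cp X) f"
    using A unfolding Gamma_pt_def by blast
qed

lemma Gamma_pt_Cp_image: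
  assumes f: "f \<in> topspace (Cp X)" and "infinite I"
    and G: "\<And>i. i \<in> I \<Longrightarrow> G i \<in> topspace (Cp X) \<and> G i \<noteq> f"
    and conv: "\<And>x e. x \<in> topspace X \<Longrightarrow> e > 0 \<Longrightarrow> finite {i \<in> I. e \<le> \<bar>G i x - f x\<bar>}"
  shows "G ` I \<in> Gamma_pt (Cp X) f"
  unfolding Gamma_pt_Cp_iff[OF f]
proof (intro conjI ballI allI impI)
  have "finite (G -` {g} \<inter> I)" if "g \<in> G ` I" for g
  proof -
    have g: "g \<in> topspace (Cp X)" "g \<noteq> f"
      using G that by auto
    have "\<not> (\<forall>x \<in> topspace X. g x = f x)"
    proof
      assume "\<forall>x \<in> topspace X. g x = f x"
      then have "g = f"
        using g(1) f by (intro extensionalityI[of _ "topspace X"]) (auto simp: topspace_Cp PiE_iff)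
      with g(2) show False ..
    qed
    then obtain x where x: "x \<in> topspace X" "g x \<noteq> f x"
      by blast
    show ?thesis
      by (rule rev_finite_subset[OF conv[OF x(1), of "\<bar>g x - f x\<bar>"]]) (use x in auto)
  qed
  moreover have "I \<subseteq> G -` (G ` I) \<inter> I"
    by blast
  ultimately show "infinite (G ` I)"
    using \<open>infinite I\<close> finite_finite_vimage_IntI[of "G ` I" G I] finite_subset by blast
  fix x e assume "x \<in> topspace X" "(e::real) > 0"
  have "{g \<in> G ` I. e \<le> \<bar>g x - f x\<bar>} = G ` {i \<in> I. e \<le> \<bar>G i x - f x\<bar>}"
    by auto
  then show "finite {g \<in> G ` I. e \<le> \<bar>g x - f x\<bar>}"
    using conv[OF \<open>x \<in> topspace X\<close> \<open>e > 0\<close>] by simp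
qed (use G in auto)

lemma Gamma_pt_Cp_obtain_seq:
  assumes f: "f \<in> topspace (Cp X)" and A: "A \<in> Gamma_pt (Cp X) f"
  obtains g :: "nat \<Rightarrow> 'a \<Rightarrow> real" where "range g \<subseteq> A"
    "\<And>x e. x \<in> topspace X \<Longrightarrow> e > 0 \<Longrightarrow> finite {m. e \<le> \<bar>g m x - f x\<bar>}"
proof -
  have A': "infinite A" "\<And>x e. x \<in> topspace X \<Longrightarrow> e > 0 \<Longrightarrow> finite {h \<in> A. e \<le> \<bar>h x - f x\<bar>}"
    using A by (simp_all add: Gamma_pt_Cp_iff[OF f])
  obtain g :: "nat \<Rightarrow> 'a \<Rightarrow> real" where g: "inj g" "range g \<subseteq> A"
    using infinite_countable_subset[OF A'(1)] by blast
  have "finite {m. e \<le> \<bar>g m x - f x\<bar>}" if "x \<in> topspace X" "e > 0" for x e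
  proof -
    have "finite (g -` {h \<in> A. e \<le> \<bar>h x - f x\<bar>})"
      using A'(2)[OF that] g(1) by (rule finite_vimageI)
    then show ?thesis
      by (rule rev_finite_subset) (use g(2) in auto)
  qed
  with g(2) show thesis
    by (rule that)
qed

lemma Gamma_F_seq_Cp_dist:
  assumes f: "f \<in> topspace (Cp X)" and g: "\<And>m. g m \<in> topspace (Cp X)"
    and conv: "\<And>x e. x \<in> topspace X \<Longrightarrow> e > 0 \<Longrightarrow> finite {m. e \<le> \<bar>g m x - f x\<bar>}"
    and "\<epsilon> > 0"
  shows "Gamma_F_seq X (\<lambda>m. {x \<in> topspace X. \<bar>g m x - f x\<bar> < \<epsilon>})
    (\<lambda>m. {x \<in> topspace X. \<bar>g m x - f x\<bar> \<le> \<epsilon> / 2})"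
  unfolding Gamma_F_seq_def gamma_family_def
proof (intro conjI allI ballI)
  fix m
  have cont: "continuous_map X euclideanreal (\<lambda>x. \<bar>g m x - f x\<bar>)"
    using g[of m] f by (intro continuous_intros) (auto simp: topspace_Cp)
  show "cozero_set X {x \<in> topspace X. \<bar>g m x - f x\<bar> < \<epsilon>}"
    by (rule cozero_set_Collect_less[OF cont])
  show "zero_set X {x \<in> topspace X. \<bar>g m x - f x\<bar> \<le> \<epsilon> / 2}"
    by (rule zero_set_Collect_le[OF cont])
  show "{x \<in> topspace X. \<bar>g m x - f x\<bar> \<le> \<epsilon> / 2} \<subseteq> {x \<in> topspace X. \<bar>g m x - f x\<bar> < \<epsilon>}"
    using \<open>\<epsilon> > 0\<close> by auto
next
  fix x assume x: "x \<in> topspace X"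
  then have "finite {m. \<epsilon> / 2 \<le> \<bar>g m x - f x\<bar>}"
    using \<open>\<epsilon> > 0\<close> by (intro conv) auto
  then show "finite {m \<in> UNIV. x \<notin> {x \<in> topspace X. \<bar>g m x - f x\<bar> \<le> \<epsilon> / 2}}"
    by (rule rev_finite_subset) (auto simp: x)
qed simp

lemma Gamma_pt_Cp_of_gamma_family:
  assumes f: "f \<in> topspace (Cp X)" and g: "\<And>n m. g n m \<in> topspace (Cp X) \<and> g n m \<noteq> f"
    and M: "\<And>n. finite (M n)"
      "gamma_family X (SIGMA n:UNIV. M n) (\<lambda>(n, m). {x \<in> topspace X. \<bar>g n m x - f x\<bar> < 1 / (real n + 1)})"
  shows "(\<Union>n. g n ` M n) \<in> Gamma_pt (Cp X) f"
proof -
  define G where "G p = g (fst p) (snd p)" for p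
  have "G ` (SIGMA n:UNIV. M n) \<in> Gamma_pt (Cp X) f"
  proof (rule Gamma_pt_Cp_image[OF f])
    show "infinite (SIGMA n:UNIV. M n)"
      using M(2) by (simp add: gamma_family_def)
    show "G p \<in> topspace (Cp X) \<and> G p \<noteq> f" for p
      unfolding G_def by (rule g)
  next
    fix x and e :: real
    assume "x \<in> topspace X" "e > 0"
    then obtain N where N: "N > 0" "inverse (real N) < e"
      using ex_inverse_of_nat_less by blast
    define Bad where "Bad = {p \<in> SIGMA n:UNIV. M n. \<not> \<bar>G p x - f x\<bar> < 1 / (real (fst p) + 1)}"
    have "finite Bad"
      using M(2) \<open>x \<in> topspace X\<close> by (simp add: gamma_family_def Bad_def G_def split_def)
    have "{p \<in> SIGMA n:UNIV. M n. e \<le> \<bar>G p x - f x\<bar>} \<subseteq> (SIGMA n:{..<N}. M n) \<union> Bad"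
    proof clarify
      fix n m assume "m \<in> M n" "e \<le> \<bar>G (n, m) x - f x\<bar>" "(n, m) \<notin> Bad"
      then have "e < 1 / (real n + 1)"
        by (simp add: Bad_def)
      moreover have "1 / (real n + 1) \<le> inverse (real N)" if "N \<le> n"
        using that N(1) by (simp add: divide_simps)
      ultimately show "n < N"
        using N(2) by (meson le_less_trans less_asym not_le)
    qed
    then show "finite {p \<in> SIGMA n:UNIV. M n. e \<le> \<bar>G p x - f x\<bar>}"
      using M(1) \<open>finite Bad\<close> by (meson finite_SigmaI finite_UnI finite_lessThan finite_subset)
  qed
  moreover have "G ` (SIGMA n:UNIV. M n) = (\<Union>n. g n ` M n)"
    by (force simp: G_def)
  ultimately show ?thesis
    by simp
qed

lemma Sfin_Gamma_F_imp_Sfin_Gamma_pt_Cp: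
  assumes Sfin: "Sfin (Gamma_F X) (Gamma_open X)" and f: "f \<in> topspace (Cp X)"
  shows "Sfin (Gamma_pt (Cp X) f) (Gamma_pt (Cp X) f)"
  unfolding Sfin_def
proof (intro allI impI)
  fix A :: "nat \<Rightarrow> ('a \<Rightarrow> real) set"
  assume A: "\<forall>n. A n \<in> Gamma_pt (Cp X) f"
  have "\<exists>g :: nat \<Rightarrow> 'a \<Rightarrow> real. range g \<subseteq> A n \<and>
      (\<forall>x \<in> topspace X. \<forall>e > 0. finite {m. e \<le> \<bar>g m x - f x\<bar>})" for n
    by (rule Gamma_pt_Cp_obtain_seq[OF f, of "A n"]) (use A in auto)
  then have "\<forall>n. \<exists>g :: nat \<Rightarrow> 'a \<Rightarrow> real. range g \<subseteq> A n \<and>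
      (\<forall>x \<in> topspace X. \<forall>e > 0. finite {m. e \<le> \<bar>g m x - f x\<bar>})"
    by blast
  from choice[OF this] obtain g :: "nat \<Rightarrow> nat \<Rightarrow> 'a \<Rightarrow> real" where g: "\<forall>n. range (g n) \<subseteq> A n \<and>
      (\<forall>x \<in> topspace X. \<forall>e > 0. finite {m. e \<le> \<bar>g n m x - f x\<bar>})" ..
  have g_Cp: "g n m \<in> topspace (Cp X) \<and> g n m \<noteq> f" for n m
    using g A Gamma_pt_Cp_iff[OF f, of "A n"] by blast
  define u where "u n m = {x \<in> topspace X. \<bar>g n m x - f x\<bar> < 1 / (real n + 1)}" for n m
  define z where "z n m = {x \<in> topspace X. \<bar>g n m x - f x\<bar> \<le> 1 / (real n + 1) / 2}" for n m
  have uz: "Gamma_F_seq X (u n) (z n)" for n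
    unfolding u_def z_def using g_Cp g by (intro Gamma_F_seq_Cp_dist[OF f]) auto
  obtain M where M: "\<And>n. finite (M n)" "gamma_family X (SIGMA n:UNIV. M n) (\<lambda>(n, m). u n m)"
    by (rule Sfin_Gamma_F_select[of X u z, OF Sfin uz]) blast
  then have "(\<Union>n. g n ` M n) \<in> Gamma_pt (Cp X) f"
    unfolding u_def by (intro Gamma_pt_Cp_of_gamma_family[OF f g_Cp])
  then show "\<exists>B. (\<forall>n. finite (B n) \<and> B n \<subseteq> A n) \<and> (\<Union>n. B n) \<in> Gamma_pt (Cp X) f"
    using M(1) g by (intro exI[of _ "\<lambda>n. g n ` M n"]) (auto simp: image_subset_iff)
qed

text \<open>Take Urysohn functions vanishing on the zero-sets and equal to \<open>1\<close> exactly off the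
  cozero-sets.\<close>
lemma Gamma_F_seq_Cp_Urysohn:
  assumes uz: "Gamma_F_seq X u z" and proper: "\<And>m. u m \<noteq> topspace X"
  obtains h where "range h \<in> Gamma_pt (Cp X) (\<lambda>x \<in> topspace X. 0)"
    "\<And>m. {x \<in> topspace X. h m x \<noteq> 1} = u m"
proof -
  define f0 :: "'a \<Rightarrow> real" where "f0 = (\<lambda>x \<in> topspace X. 0)"
  have "\<forall>m. \<exists>H. continuous_map X (top_of_set {0..1::real}) H \<and> (\<forall>x \<in> z m. H x = 0) \<and>
      (\<forall>x \<in> topspace X. H x = 1 \<longleftrightarrow> x \<notin> u m)"
    using uz unfolding Gamma_F_seq_def by (metis zero_set_cozero_set_separation)
  from choice[OF this] obtain H where H: "\<forall>m. continuous_map X (top_of_set {0..1::real}) (H m) \<and>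
      (\<forall>x \<in> z m. H m x = 0) \<and> (\<forall>x \<in> topspace X. H m x = 1 \<longleftrightarrow> x \<notin> u m)" ..
  define h where "h m = (\<lambda>x \<in> topspace X. H m x)" for m
  have f0: "f0 \<in> topspace (Cp X)"
    by (simp add: f0_def topspace_Cp)
  have u_sub: "u m \<subseteq> topspace X" for m
    using uz by (simp add: Gamma_F_seq_def cozero_set_subset_topspace)
  have "range h \<in> Gamma_pt (Cp X) f0"
  proof (rule Gamma_pt_Cp_image[OF f0])
    fix m
    obtain x where "x \<in> topspace X" "x \<notin> u m"
      using proper[of m] u_sub[of m] by blast
    then have "H m x = 1"
      using H by blast
    then have "h m x \<noteq> f0 x"
      using \<open>x \<in> topspace X\<close> by (simp add: h_def f0_def)
    moreover have "h m \<in> topspace (Cp X)"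
      using H by (simp add: h_def topspace_Cp continuous_map_in_subtopology)
    ultimately show "h m \<in> topspace (Cp X) \<and> h m \<noteq> f0"
      by auto
  next
    fix x and e :: real
    assume "x \<in> topspace X" "e > 0"
    then have "{m \<in> UNIV. e \<le> \<bar>h m x - f0 x\<bar>} \<subseteq> {m. x \<notin> z m}"
      using H by (auto simp: h_def f0_def)
    moreover have "finite {m. x \<notin> z m}"
      using uz \<open>x \<in> topspace X\<close> by (simp add: Gamma_F_seq_def gamma_family_def)
    ultimately show "finite {m \<in> UNIV. e \<le> \<bar>h m x - f0 x\<bar>}"
      by (rule finite_subset)
  qed simp
  moreover have "{x \<in> topspace X. h m x \<noteq> 1} = u m" for m
    using H u_sub[of m] by (auto simp: h_def)
  ultimately show thesis
    unfolding f0_def by (rule that)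
qed

lemma Gamma_pt_Cp_zero_imp_gamma_family:
  assumes "\<G> \<in> Gamma_pt (Cp X) (\<lambda>x \<in> topspace X. 0)"
  shows "gamma_family X \<G> (\<lambda>g. {x \<in> topspace X. g x \<noteq> 1})"
  unfolding gamma_family_def
proof (intro conjI ballI)
  have f0: "(\<lambda>x \<in> topspace X. 0) \<in> topspace (Cp X)"
    by (simp add: topspace_Cp)
  show "infinite \<G>"
    using assms by (simp add: Gamma_pt_Cp_iff[OF f0])
  fix x assume x: "x \<in> topspace X"
  then have "finite {g \<in> \<G>. 1 \<le> \<bar>g x - (\<lambda>x \<in> topspace X. 0) x\<bar>}"
    using assms by (simp add: Gamma_pt_Cp_iff[OF f0])
  then show "finite {g \<in> \<G>. x \<notin> {x \<in> topspace X. g x \<noteq> 1}}"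
    by (rule rev_finite_subset) (auto simp: x)
qed

lemma Sfin_Gamma_pt_Cp_zero_imp_Sfin_Gamma_F:
  fixes X :: "'a topology"
  defines "f0 \<equiv> \<lambda>x \<in> topspace X. 0"
  assumes Sfin: "Sfin (Gamma_pt (Cp X) f0) (Gamma_pt (Cp X) f0)"
  shows "Sfin (Gamma_F X) (Gamma_open X)"
  unfolding Sfin_def
proof (intro allI impI)
  fix A :: "nat \<Rightarrow> 'a set set"
  assume "\<forall>n. A n \<in> Gamma_F X"
  then have A: "\<And>n. A n \<in> Gamma_F X"
    by blast
  obtain u z where u: "\<And>n m. u n m \<in> A n" and uz: "\<And>n. Gamma_F_seq X (u n) (z n)"
    by (rule Gamma_F_obtain_seqs[of A X, OF A]) blast
  have u_proper: "u n m \<noteq> topspace X" for n m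
    using Gamma_F_member[OF A u] by blast
  have "\<exists>h. range h \<in> Gamma_pt (Cp X) f0 \<and> (\<forall>m. {x \<in> topspace X. h m x \<noteq> 1} = u n m)" for n
    unfolding f0_def by (rule Gamma_F_seq_Cp_Urysohn[of X "u n" "z n", OF uz u_proper]) auto
  then have "\<forall>n. \<exists>h. range h \<in> Gamma_pt (Cp X) f0 \<and> (\<forall>m. {x \<in> topspace X. h m x \<noteq> 1} = u n m)"
    by blast
  from choice[OF this] obtain h where h: "\<forall>n. range (h n) \<in> Gamma_pt (Cp X) f0 \<and>
      (\<forall>m. {x \<in> topspace X. h n m x \<noteq> 1} = u n m)" ..
  then obtain B where B: "\<forall>n. finite (B n) \<and> B n \<subseteq> range (h n)" "(\<Union>n. B n) \<in> Gamma_pt (Cp X) f0"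
    using Sfin[unfolded Sfin_def, rule_format, of "\<lambda>n. range (h n)"] by blast
  define s where "s g = {x \<in> topspace X. g x \<noteq> 1}" for g :: "'a \<Rightarrow> real"
  have s_B: "s ` B n \<subseteq> A n" for n
    using B(1) h u by (force simp: s_def)
  have s_family: "gamma_family X (\<Union>n. B n) s"
    using Gamma_pt_Cp_zero_imp_gamma_family[of "\<Union>n. B n" X] B(2) by (simp add: f0_def s_def[abs_def])
  have s_props: "s g \<subseteq> topspace X \<and> s g \<noteq> topspace X \<and> openin X (s g)"
    if g: "g \<in> (\<Union>n. B n)" for g
  proof -
    obtain n where "s g \<in> A n"
      using g s_B by blast
    then show ?thesis
      by (rule Gamma_F_member[OF A])
  qed
  have "gamma_cover X (s ` (\<Union>n. B n))"
    using s_family by (rule gamma_cover_image) (use s_props in blast)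
  moreover have "(\<Union>n. s ` B n) = s ` (\<Union>n. B n)"
    by blast
  ultimately have "(\<Union>n. s ` B n) \<in> Gamma_open X"
    using s_props by (auto simp: Gamma_open_def)
  then show "\<exists>B. (\<forall>n. finite (B n) \<and> B n \<subseteq> A n) \<and> (\<Union>n. B n) \<in> Gamma_open X"
    using B(1) s_B by (intro exI[of _ "\<lambda>n. s ` B n"]) simp
qed

section \<open>Clopen covers and strong zero-dimensionality\<close>

lemma Gamma_cl_subset_Gamma_F: "Gamma_cl X \<subseteq> Gamma_F X"
proof
  fix \<U> assume "\<U> \<in> Gamma_cl X"
  then have "gamma_cover X \<U>" and clopen: "\<And>U. U \<in> \<U> \<Longrightarrow> openin X U \<and> closedin X U"
    by (auto simp: Gamma_cl_def)
  then show "\<U> \<in> Gamma_F X"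
    unfolding Gamma_F_def
    by (intro CollectI conjI exI[of _ "\<lambda>U. U"]) (auto simp: zero_set_clopen cozero_set_clopen)
qed

lemma Sfin_restrict:
  assumes "Sfin \<A> \<B>" "\<A>' \<subseteq> \<A>" "\<And>\<U>. \<U> \<in> \<B> \<Longrightarrow> \<U> \<subseteq> \<Union>\<A>' \<Longrightarrow> \<U> \<in> \<B>'"
  shows "Sfin \<A>' \<B>'"
  unfolding Sfin_def
proof (intro allI impI)
  fix A :: "nat \<Rightarrow> _"
  assume A: "\<forall>n. A n \<in> \<A>'"
  then obtain B where B: "\<forall>n. finite (B n) \<and> B n \<subseteq> A n" "(\<Union>n. B n) \<in> \<B>"
    using assms(1)[unfolded Sfin_def, rule_format, of A] assms(2) by blast
  moreover have "(\<Union>n. B n) \<subseteq> \<Union>\<A>'"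
    using A B(1) by blast
  ultimately show "\<exists>B. (\<forall>n. finite (B n) \<and> B n \<subseteq> A n) \<and> (\<Union>n. B n) \<in> \<B>'"
    using assms(3) by blast
qed

lemma Sfin_Gamma_F_imp_Sfin_Gamma_cl:
  assumes "Sfin (Gamma_F X) (Gamma_open X)"
  shows "Sfin (Gamma_cl X) (Gamma_cl X)"
  using assms Gamma_cl_subset_Gamma_F
  by (rule Sfin_restrict) (auto simp: Gamma_open_def Gamma_cl_def)

lemma strongly_zero_dimensional_clopen_between:
  assumes "strongly_zero_dimensional X" "zero_set X Z" "cozero_set X U" "Z \<subseteq> U"
  obtains C where "openin X C" "closedin X C" "Z \<subseteq> C" "C \<subseteq> U"
proof -
  obtain h where h: "continuous_map X (top_of_set {0..1::real}) h" "\<And>x. x \<in> Z \<Longrightarrow> h x = 0"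
    "\<And>x. x \<in> topspace X \<Longrightarrow> h x = 1 \<longleftrightarrow> x \<notin> U"
    by (rule zero_set_cozero_set_separation[OF assms(2-4)]) blast
  have "h ` Z \<subseteq> {0}" "h ` (topspace X - U) \<subseteq> {1}"
    using h(2,3) by auto
  then obtain C where C: "openin X C" "closedin X C" "Z \<subseteq> C" "C \<inter> (topspace X - U) = {}"
    using assms(1) h(1) zero_set_subset_topspace[OF assms(2)]
    unfolding strongly_zero_dimensional_def by (meson Diff_subset)
  moreover have "C \<subseteq> U"
    using C(4) closedin_subset[OF C(2)] by blast
  ultimately show thesis
    using that by blast
qed

lemma strongly_zero_dimensional_Gamma_F_seq_clopen:
  assumes szd: "strongly_zero_dimensional X"
    and uz: "Gamma_F_seq X u z" and proper: "\<And>m. u m \<noteq> topspace X"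
  shows "\<exists>C. range C \<in> Gamma_cl X \<and> (\<forall>m. C m \<subseteq> u m)"
proof -
  have "\<forall>m. \<exists>C. openin X C \<and> closedin X C \<and> z m \<subseteq> C \<and> C \<subseteq> u m"
    using uz unfolding Gamma_F_seq_def by (metis strongly_zero_dimensional_clopen_between[OF szd])
  from choice[OF this] obtain C
    where C: "\<forall>m. openin X (C m) \<and> closedin X (C m) \<and> z m \<subseteq> C m \<and> C m \<subseteq> u m" ..
  have "gamma_family X UNIV C"
    using uz C by (auto simp: Gamma_F_seq_def intro: gamma_family_mono)
  moreover have "C m \<subseteq> topspace X \<and> C m \<noteq> topspace X" for m
  proof -
    have "C m \<subseteq> u m" "u m \<subseteq> topspace X"
      using C uz by (simp_all add: Gamma_F_seq_def cozero_set_subset_topspace)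
    then show ?thesis
      using proper[of m] by blast
  qed
  ultimately have "gamma_cover X (range C)"
    by (rule gamma_cover_image)
  then show ?thesis
    using C by (auto simp: Gamma_cl_def)
qed

lemma Sfin_Gamma_cl_imp_Sfin_Gamma_F:
  assumes Sfin: "Sfin (Gamma_cl X) (Gamma_cl X)" and szd: "strongly_zero_dimensional X"
  shows "Sfin (Gamma_F X) (Gamma_open X)"
  unfolding Sfin_def
proof (intro allI impI)
  fix A :: "nat \<Rightarrow> 'a set set"
  assume "\<forall>n. A n \<in> Gamma_F X"
  then have A: "\<And>n. A n \<in> Gamma_F X"
    by blast
  obtain u z where u: "\<And>n m. u n m \<in> A n" and uz: "\<And>n. Gamma_F_seq X (u n) (z n)"
    by (rule Gamma_F_obtain_seqs[of A X, OF A]) blast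
  have u_proper: "u n m \<subseteq> topspace X \<and> u n m \<noteq> topspace X" for n m
    using Gamma_F_member[OF A u] by blast
  have "\<forall>n. \<exists>C. range C \<in> Gamma_cl X \<and> (\<forall>m. C m \<subseteq> u n m)"
    using strongly_zero_dimensional_Gamma_F_seq_clopen[OF szd uz] u_proper by blast
  from choice[OF this] obtain C where C: "\<forall>n. range (C n) \<in> Gamma_cl X \<and> (\<forall>m. C n m \<subseteq> u n m)" ..
  then obtain B where B: "\<forall>n. finite (B n) \<and> B n \<subseteq> range (C n)" "(\<Union>n. B n) \<in> Gamma_cl X"
    using Sfin[unfolded Sfin_def, rule_format, of "\<lambda>n. range (C n)"] by blast
  then have "gamma_cover X (\<Union>n. B n)"
    by (simp add: Gamma_cl_def)
  then obtain M where M: "\<And>n. finite (M n)" "gamma_family X (SIGMA n:UNIV. M n) (\<lambda>(n, m). C n m)"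
    by (rule gamma_cover_Union_imp_gamma_family[of X B C]) (use B in auto)
  have "gamma_family X (SIGMA n:UNIV. M n) (\<lambda>(n, m). u n m)"
    by (rule gamma_family_mono[OF M(2)]) (use C in auto)
  then have "gamma_cover X ((\<lambda>(n, m). u n m) ` (SIGMA n:UNIV. M n))"
    by (rule gamma_cover_image) (use u_proper in auto)
  moreover have "(\<lambda>(n, m). u n m) ` (SIGMA n:UNIV. M n) = (\<Union>n. u n ` M n)"
    by force
  moreover have "openin X (u n m)" for n m
    using uz[of n] by (simp add: Gamma_F_seq_def openin_cozero_set)
  ultimately have "(\<Union>n. u n ` M n) \<in> Gamma_open X"
    by (auto simp: Gamma_open_def)
  then show "\<exists>B. (\<forall>n. finite (B n) \<and> B n \<subseteq> A n) \<and> (\<Union>n. B n) \<in> Gamma_open X"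
    using M(1) u by (intro exI[of _ "\<lambda>n. u n ` M n"]) auto
qed

lemma dyadic_between:
  fixes p q :: real
  assumes "0 \<le> p" "q \<le> 1" "2 / 2 ^ L < q - p"
  obtains j :: nat where "j < 2 ^ L" "p \<le> real j / 2 ^ L" "real j / 2 ^ L + 1 / 2 ^ L \<le> q"
proof
  define j where "j = nat \<lceil>p * 2 ^ L\<rceil>"
  have j: "p * 2 ^ L \<le> real j" "real j < p * 2 ^ L + 1"
    using assms(1) by (auto simp: j_def) linarith+
  have "real j + 1 < q * 2 ^ L"
    using j(2) assms(3) by (simp add: field_simps)
  also have "\<dots> \<le> 2 ^ L"
    using assms(2) by simp
  finally have "real j < 2 ^ L"
    by linarith
  then show "j < 2 ^ L"
    by simp
  show "p \<le> real j / 2 ^ L" "real j / 2 ^ L + 1 / 2 ^ L \<le> q"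
    using j(1) \<open>real j + 1 < q * 2 ^ L\<close> by (simp_all add: field_simps)
qed

text \<open>The dyadic intervals \<open>[j/2\<^sup>L, (j+1)/2\<^sup>L]\<close>, each listed infinitely often.\<close>
lemma dyadic_intervals_enumeration:
  obtains a r :: "nat \<Rightarrow> real" where "\<And>k. 0 \<le> a k" "\<And>k. 0 < r k" "\<And>k. a k + r k \<le> 1"
    "\<And>p q N. 0 \<le> p \<Longrightarrow> p < q \<Longrightarrow> q \<le> 1 \<Longrightarrow> \<exists>k \<ge> N. p \<le> a k \<and> a k + r k \<le> q"
proof
  define a where "a k = real (snd (prod_decode k) mod 2 ^ fst (prod_decode k)) / 2 ^ fst (prod_decode k)" for k
  define r :: "nat \<Rightarrow> real" where "r k = 1 / 2 ^ fst (prod_decode k)" for k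
  show "0 \<le> a k" "0 < r k" for k
    by (simp_all add: a_def r_def)
  show "a k + r k \<le> 1" for k
  proof -
    obtain L j where Lj: "prod_decode k = (L, j)"
      by fastforce
    have "j mod 2 ^ L + 1 \<le> (2::nat) ^ L"
      by (simp add: Suc_le_eq)
    then have "real (j mod 2 ^ L + 1) \<le> real ((2::nat) ^ L)"
      by (simp only: of_nat_le_iff)
    then show ?thesis
      by (simp add: a_def r_def Lj divide_simps)
  qed
  fix p q :: real and N :: nat
  assume pq: "0 \<le> p" "p < q" "q \<le> 1"
  obtain L0 where L0: "(1/2) ^ L0 < (q - p) / 2"
    using real_arch_pow_inv[of "(q - p) / 2" "1/2"] pq by auto
  define L where "L = max N L0"
  have "(1/2::real) ^ L \<le> (1/2) ^ L0"
    unfolding L_def by (rule power_decreasing) auto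
  then have "2 / 2 ^ L < q - p"
    using L0 by (simp add: power_one_over)
  then obtain j where j: "j < 2 ^ L" "p \<le> real j / 2 ^ L" "real j / 2 ^ L + 1 / 2 ^ L \<le> q"
    using dyadic_between pq by blast
  define k where "k = prod_encode (L, j)"
  have "N \<le> k"
    unfolding k_def L_def by (meson le_prod_encode_1 max.bounded_iff order.trans)
  moreover have "a k = real j / 2 ^ L" "r k = 1 / 2 ^ L"
    using j(1) by (simp_all add: a_def r_def k_def)
  ultimately show "\<exists>k \<ge> N. p \<le> a k \<and> a k + r k \<le> q"
    using j by auto
qed

lemma compact_recurrent_nest:
  fixes K :: "nat \<Rightarrow> 'a::heine_borel set"
  assumes "\<And>k. compact (K k)" "\<And>k. K k \<noteq> {}" "\<And>k. \<exists>k' > k. K k' \<subseteq> K k"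
  obtains y where "y \<in> K 0" "infinite {k. y \<in> K k}"
proof -
  from choice[of "\<lambda>k k'. k < k' \<and> K k' \<subseteq> K k"] obtain succ where
    succ: "\<forall>k. k < succ k \<and> K (succ k) \<subseteq> K k"
    using assms(3) by blast
  define kk where "kk j = (succ ^^ j) 0" for j
  have kk_Suc: "kk (Suc j) = succ (kk j)" for j
    by (simp add: kk_def)
  have "K (kk (Suc j)) \<subseteq> K (kk j)" for j
    using succ by (simp add: kk_Suc)
  then have "K (kk j') \<subseteq> K (kk j)" if "j \<le> j'" for j j'
    using that by (rule lift_Suc_antimono_le[of "\<lambda>j. K (kk j)"])
  then have "\<Inter> (range (\<lambda>j. K (kk j))) \<noteq> {}"
    using assms(1,2) by (intro compact_nest) auto
  then obtain y where y: "\<And>j. y \<in> K (kk j)"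
    by blast
  have "strict_mono kk"
    unfolding strict_mono_Suc_iff using succ kk_Suc by simp
  then have "infinite (range kk)"
    using strict_mono_imp_inj_on range_inj_infinite by blast
  moreover have "range kk \<subseteq> {k. y \<in> K k}"
    using y by blast
  ultimately have "infinite {k. y \<in> K k}"
    using finite_subset by blast
  moreover have "y \<in> K 0"
    using y[of 0] by (simp add: kk_def)
  ultimately show thesis
    using that by blast
qed

lemma Gamma_F_seq_interval_complements:
  fixes a r :: real
  assumes f: "continuous_map X euclideanreal f" and r: "r > 0"
  shows "Gamma_F_seq X (\<lambda>m. {x \<in> topspace X. f x < a + r / 2 ^ (m + 2) \<or> a + r / 2 ^ (m + 1) < f x})
    (\<lambda>m. {x \<in> topspace X. f x \<le> a + r / 2 ^ (m + 3) \<or> a + r / 2 ^ m \<le> f x})"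
proof -
  define t where "t m = a + r / 2 ^ m" for m
  have t_Suc: "t (m + 1) < t m" and t_gt: "a < t m" for m
    using r by (simp_all add: t_def divide_strict_left_mono)
  have "Gamma_F_seq X (\<lambda>m. {x \<in> topspace X. f x < t (m + 2) \<or> t (m + 1) < f x})
    (\<lambda>m. {x \<in> topspace X. f x \<le> t (m + 3) \<or> t m \<le> f x})"
    unfolding Gamma_F_seq_def gamma_family_def
  proof (intro conjI allI ballI)
    fix m
    show "cozero_set X {x \<in> topspace X. f x < t (m + 2) \<or> t (m + 1) < f x}"
      by (rule cozero_set_Collect_outside[OF f])
    show "zero_set X {x \<in> topspace X. f x \<le> t (m + 3) \<or> t m \<le> f x}"
      by (rule zero_set_Collect_outside[OF f])
    show "{x \<in> topspace X. f x \<le> t (m + 3) \<or> t m \<le> f x}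
        \<subseteq> {x \<in> topspace X. f x < t (m + 2) \<or> t (m + 1) < f x}"
      using t_Suc[of "m + 2"] t_Suc[of m] by (auto simp: eval_nat_numeral)
  next
    fix x assume x: "x \<in> topspace X"
    show "finite {m \<in> UNIV. x \<notin> {x \<in> topspace X. f x \<le> t (m + 3) \<or> t m \<le> f x}}"
    proof (cases "f x \<le> a")
      case True
      then have "f x \<le> t (m + 3)" for m
        using t_gt[of "m + 3"] by linarith
      then show ?thesis
        using x by simp
    next
      case False
      then obtain L where "(1/2) ^ L < (f x - a) / r"
        using real_arch_pow_inv[of "(f x - a) / r" "1/2"] r by auto
      then have L: "t L < f x"
        using r by (simp add: t_def power_one_over field_simps)
      have "t m \<le> f x" if "L \<le> m" for m
      proof -
        have "t m \<le> t L"
          using that r by (simp add: t_def divide_left_mono)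
        then show ?thesis
          using L by linarith
      qed
      then have "{m \<in> UNIV. x \<notin> {x \<in> topspace X. f x \<le> t (m + 3) \<or> t m \<le> f x}} \<subseteq> {..<L}"
        using x by (auto simp: not_less[symmetric])
      then show ?thesis
        by (simp add: finite_subset)
    qed
  qed simp
  then show ?thesis
    by (simp add: t_def)
qed

text \<open>The intervals \<open>[a + r/2\<^sup>m\<^sup>+\<^sup>2, a + r/2\<^sup>m\<^sup>+\<^sup>1]\<close> inside the dyadic intervals \<open>[a, a + r]\<close>
  can be nested along any choice of the exponents.\<close>
lemma dyadic_subintervals_common_point:
  obtains a r :: "nat \<Rightarrow> real" where "\<And>k. 0 < r k"
    "\<And>m. \<exists>y. 0 < y \<and> y < 1 \<and>
      infinite {k. a k + r k / 2 ^ (m k + 2) \<le> y \<and> y \<le> a k + r k / 2 ^ (m k + 1)}"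
proof -
  obtain a r :: "nat \<Rightarrow> real" where a: "\<And>k. 0 \<le> a k" and r: "\<And>k. 0 < r k"
    and ar: "\<And>k. a k + r k \<le> 1"
    and dense: "\<And>p q N. 0 \<le> p \<Longrightarrow> p < q \<Longrightarrow> q \<le> 1 \<Longrightarrow> \<exists>k \<ge> N. p \<le> a k \<and> a k + r k \<le> q"
    by (rule dyadic_intervals_enumeration) blast
  define t where "t k m = a k + r k / 2 ^ m" for k m
  have t_Suc: "t k (m + 1) < t k m" and t_gt: "a k < t k m" for k m
    using r[of k] by (simp_all add: t_def divide_strict_left_mono)
  have t_le: "t k m \<le> a k + r k" for k m
  proof -
    have "r k / 2 ^ m \<le> r k / 1"
      using r[of k] by (intro divide_left_mono) auto
    then show ?thesis
      by (simp add: t_def)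
  qed
  show thesis
  proof (rule that)
    show "0 < r k" for k
      by (rule r)
    fix m :: "nat \<Rightarrow> nat"
    define K where "K k = {t k (m k + 2) .. t k (m k + 1)}" for k
    have K_sub: "K k \<subseteq> {a k <..< a k + r k}" for k
      using t_gt[of k "m k + 2"] t_Suc[of k "m k"] t_le[of k "m k"] by (auto simp: K_def)
    have K_compact: "compact (K k)" for k
      by (simp add: K_def)
    have K_nonempty: "K k \<noteq> {}" for k
      using t_Suc[of k "m k + 1"] by (simp add: K_def)
    have K_recurrent: "\<exists>k' > k. K k' \<subseteq> K k" for k
    proof -
      have "0 \<le> t k (m k + 2)" "t k (m k + 2) < t k (m k + 1)" "t k (m k + 1) \<le> 1"
        using a[of k] t_gt[of k "m k + 2"] t_Suc[of k "m k + 1"] t_le[of k "m k + 1"] ar[of k]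
        by (simp_all add: eval_nat_numeral)
      then obtain k' where "k' \<ge> Suc k" "t k (m k + 2) \<le> a k'" "a k' + r k' \<le> t k (m k + 1)"
        using dense by blast
      then show ?thesis
        using K_sub[of k'] by (intro exI[of _ k']) (auto simp: K_def)
    qed
    obtain y where "y \<in> K 0" "infinite {k. y \<in> K k}"
      by (rule compact_recurrent_nest[of K, OF K_compact K_nonempty K_recurrent]) blast
    moreover have "0 < y \<and> y < 1" if "y \<in> K 0" for y
      using that K_sub[of 0] a[of 0] ar[of 0] by auto
    ultimately show "\<exists>y. 0 < y \<and> y < 1 \<and>
        infinite {k. a k + r k / 2 ^ (m k + 2) \<le> y \<and> y \<le> a k + r k / 2 ^ (m k + 1)}"
      by (auto simp: K_def t_def)
  qed
qed

text \<open>A diagonal selection from the complements of the nested intervals misses their common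
  point, which therefore cannot be a value of the function.\<close>
lemma Sfin_Gamma_F_continuous_image_gap:
  assumes Sfin: "Sfin (Gamma_F X) (Gamma_open X)" and f: "continuous_map X euclideanreal f"
  obtains c where "0 < c" "c < 1" "c \<notin> f ` topspace X"
proof (rule ccontr)
  assume "\<not> thesis"
  then have onto: "\<And>c. 0 < c \<Longrightarrow> c < 1 \<Longrightarrow> c \<in> f ` topspace X"
    using that by blast
  obtain a r :: "nat \<Rightarrow> real" where r: "\<And>k. 0 < r k" and nest: "\<And>m. \<exists>y. 0 < y \<and> y < 1 \<and>
      infinite {k. a k + r k / 2 ^ (m k + 2) \<le> y \<and> y \<le> a k + r k / 2 ^ (m k + 1)}"
    by (rule dyadic_subintervals_common_point) blast
  define u where
    "u k m = {x \<in> topspace X. f x < a k + r k / 2 ^ (m + 2) \<or> a k + r k / 2 ^ (m + 1) < f x}" for k m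
  define z where
    "z k m = {x \<in> topspace X. f x \<le> a k + r k / 2 ^ (m + 3) \<or> a k + r k / 2 ^ m \<le> f x}" for k m
  have uz: "Gamma_F_seq X (u k) (z k)" for k
    unfolding u_def z_def by (rule Gamma_F_seq_interval_complements[OF f r])
  obtain m where m: "gamma_family X UNIV (\<lambda>k. u k (m k))"
    by (rule Sfin_Gamma_F_diagonal[of X u z, OF Sfin uz]) blast
  obtain y where "0 < y" "y < 1"
    and y: "infinite {k. a k + r k / 2 ^ (m k + 2) \<le> y \<and> y \<le> a k + r k / 2 ^ (m k + 1)}"
    using nest[of m] by blast
  then obtain x where x: "x \<in> topspace X" "f x = y"
    using onto by blast
  then have "{k. a k + r k / 2 ^ (m k + 2) \<le> y \<and> y \<le> a k + r k / 2 ^ (m k + 1)}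
      \<subseteq> {k. x \<notin> u k (m k)}"
    by (auto simp: u_def)
  moreover have "finite {k. x \<notin> u k (m k)}"
    using m x by (simp add: gamma_family_def)
  ultimately show False
    using y finite_subset by blast
qed

lemma Sfin_Gamma_F_imp_strongly_zero_dimensional:
  assumes "Sfin (Gamma_F X) (Gamma_open X)"
  shows "strongly_zero_dimensional X"
  unfolding strongly_zero_dimensional_def
proof (intro allI impI)
  fix A B
  assume "A \<subseteq> topspace X \<and> B \<subseteq> topspace X \<and>
    (\<exists>f. continuous_map X (top_of_set {0..1::real}) f \<and> f ` A \<subseteq> {0} \<and> f ` B \<subseteq> {1})"
  then obtain f where f: "continuous_map X (top_of_set {0..1::real}) f" "f ` A \<subseteq> {0}" "f ` B \<subseteq> {1}"
    and "A \<subseteq> topspace X"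
    by blast
  then have f_cont: "continuous_map X euclideanreal f"
    by (simp add: continuous_map_in_subtopology)
  obtain c where c: "0 < c" "c < 1" "c \<notin> f ` topspace X"
    by (rule Sfin_Gamma_F_continuous_image_gap[OF assms f_cont]) blast
  define C where "C = {x \<in> topspace X. f x < c}"
  have "openin X C"
    unfolding C_def using f_cont by (simp add: continuous_map_upper_lower_semicontinuous_lt)
  moreover have "C = {x \<in> topspace X. f x \<le> c}"
    using c(3) by (force simp: C_def)
  then have "closedin X C"
    using f_cont by (simp add: continuous_map_upper_lower_semicontinuous_le)
  moreover have "A \<subseteq> C" "C \<inter> B = {}"
    using f(2,3) c(1,2) \<open>A \<subseteq> topspace X\<close> by (auto simp: C_def)
  ultimately show "\<exists>C. openin X C \<and> closedin X C \<and> A \<subseteq> C \<and> C \<inter> B = {}"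
    by blast
qed

theorem mainTheorem11:
  fixes X :: "'a topology"
  assumes "tychonoff_space X"
  shows "((\<forall>f \<in> topspace (Cp X). Sfin (Gamma_pt (Cp X) f) (Gamma_pt (Cp X) f))
            \<longleftrightarrow> Sfin (Gamma_F X) (Gamma_open X))
       \<and> (Sfin (Gamma_F X) (Gamma_open X)
            \<longleftrightarrow> Sfin (Gamma_cl X) (Gamma_cl X) \<and> strongly_zero_dimensional X)
       \<and> (Sfin (Gamma_F X) (Gamma_open X) \<longleftrightarrow> S1 (Gamma_F X) (Gamma_open X))"
proof -
  have "(\<lambda>x \<in> topspace X. 0) \<in> topspace (Cp X)"
    by (simp add: topspace_Cp)
  then have "(\<forall>f \<in> topspace (Cp X). Sfin (Gamma_pt (Cp X) f) (Gamma_pt (Cp X) f))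
      \<longleftrightarrow> Sfin (Gamma_F X) (Gamma_open X)"
    using Sfin_Gamma_pt_Cp_zero_imp_Sfin_Gamma_F Sfin_Gamma_F_imp_Sfin_Gamma_pt_Cp by blast
  moreover have "Sfin (Gamma_F X) (Gamma_open X)
      \<longleftrightarrow> Sfin (Gamma_cl X) (Gamma_cl X) \<and> strongly_zero_dimensional X"
    using Sfin_Gamma_F_imp_Sfin_Gamma_cl Sfin_Gamma_F_imp_strongly_zero_dimensional
      Sfin_Gamma_cl_imp_Sfin_Gamma_F by blast
  moreover have "Sfin (Gamma_F X) (Gamma_open X) \<longleftrightarrow> S1 (Gamma_F X) (Gamma_open X)"
    using Sfin_Gamma_F_imp_S1 S1_imp_Sfin by blast
  ultimately show ?thesis
    by blast
qed

end
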